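(* Consider the system $\frac{dT}{dt}=s+r_TT\left(1-\frac{T+I}{T_{\max}}\right)-dT-\frac{bTV}{T+I}$, $\frac{dI}{dt}=r_II\left(1-\frac{T+I}{T_{\max}}\right)+\frac{bTV}{T+I}-\delta I$, $\frac{dV}{dt}=\rho R^*I-cV-\frac{bTV}{T+I}$. There exist parameter values for which ${\cal R}_0<1$ and there exist exactly two positive steady states, one stable and one unstable. There is a variation of parameters under which these two steady states coalesce in a generic fold bifurcation.
   Context: Parameters $s,r_T,T_{\max},d,b,r_I,\delta,\rho,R^*,c$ are positive constants. Let $p_0=\left(r_T-d+\sqrt{(r_T-d)^2+\frac{4sr_T}{T_{\max}}}\right)\frac{T_{\max}}{2r_T}$; the disease-free equilibrium is $(T,I,V)=(p_0,0,0)$. For parameters with $\delta>r_I(1-p_0/T_{\max})$ the basic reproductive ratio is ${\cal R}_0=\frac{b\rho R^*}{(b+c)\left(\delta-r_I(1-\frac{p_0}{T_{\max}})\right)}$. A positive steady state is a steady state with $T,I,V>0$; a generic fold bifurcation is a non-degenerate saddle-node bifurcation. *)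

theory Defs
  imports "HOL-Analysis.Analysis"
begin

record params =
  s_p :: real
  rT :: real
  Tmax :: real
  d_p :: real
  b_p :: real
  rI :: real
  delta :: real
  rho :: real
  Rstar :: real
  c_p :: real

definition pos_params :: "params \<Rightarrow> bool" where
  "pos_params p \<longleftrightarrow> s_p p > 0 \<and> rT p > 0 \<and> Tmax p > 0 \<and> d_p p > 0 \<and> b_p p > 0 \<and>
     rI p > 0 \<and> delta p > 0 \<and> rho p > 0 \<and> Rstar p > 0 \<and> c_p p > 0"

definition field :: "params \<Rightarrow> real^3 \<Rightarrow> real^3" where
  "field p x = (let T = x$1; I = x$2; V = x$3 in
     vector [ s_p p + rT p * T * (1 - (T + I) / Tmax p) - d_p p * T - b_p p * T * V / (T + I),
              rI p * I * (1 - (T + I) / Tmax p) + b_p p * T * V / (T + I) - delta p * I,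
              rho p * Rstar p * I - c_p p * V - b_p p * T * V / (T + I) ])"

definition positive_state :: "real^3 \<Rightarrow> bool" where
  "positive_state x \<longleftrightarrow> x$1 > 0 \<and> x$2 > 0 \<and> x$3 > 0"

definition pos_steady_states :: "params \<Rightarrow> (real^3) set" where
  "pos_steady_states p = {x. positive_state x \<and> field p x = 0}"

definition p0 :: "params \<Rightarrow> real" where
  "p0 p = (rT p - d_p p + sqrt ((rT p - d_p p)^2 + 4 * s_p p * rT p / Tmax p)) * Tmax p / (2 * rT p)"

definition R0 :: "params \<Rightarrow> real" where
  "R0 p = b_p p * rho p * Rstar p /
          ((b_p p + c_p p) * (delta p - rI p * (1 - p0 p / Tmax p)))"

definition jac :: "params \<Rightarrow> real^3 \<Rightarrow> real^3^3" where
  "jac p x = matrix (frechet_derivative (field p) (at x))"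

definition charpoly :: "real^3^3 \<Rightarrow> complex \<Rightarrow> complex" where
  "charpoly A z = det (\<chi> i j. (if i = j then z else 0) - complex_of_real (A $ i $ j))"

definition stable_ss :: "params \<Rightarrow> real^3 \<Rightarrow> bool" where
  "stable_ss p x \<longleftrightarrow> field p differentiable (at x) \<and>
     (\<forall>z. charpoly (jac p x) z = 0 \<longrightarrow> Re z < 0)"

definition unstable_ss :: "params \<Rightarrow> real^3 \<Rightarrow> bool" where
  "unstable_ss p x \<longleftrightarrow> field p differentiable (at x) \<and>
     (\<exists>z. charpoly (jac p x) z = 0 \<and> Re z > 0)"

definition C1_fun :: "(real \<Rightarrow> real) \<Rightarrow> bool" where
  "C1_fun f \<longleftrightarrow> (\<exists>f'. (\<forall>t. (f has_real_derivative f' t) (at t)) \<and> continuous_on UNIV f')"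

definition smooth_variation :: "(real \<Rightarrow> params) \<Rightarrow> bool" where
  "smooth_variation \<pi> \<longleftrightarrow>
     C1_fun (s_p \<circ> \<pi>) \<and> C1_fun (rT \<circ> \<pi>) \<and> C1_fun (Tmax \<circ> \<pi>) \<and> C1_fun (d_p \<circ> \<pi>) \<and>
     C1_fun (b_p \<circ> \<pi>) \<and> C1_fun (rI \<circ> \<pi>) \<and> C1_fun (delta \<circ> \<pi>) \<and> C1_fun (rho \<circ> \<pi>) \<and>
     C1_fun (Rstar \<circ> \<pi>) \<and> C1_fun (c_p \<circ> \<pi>)"

text \<open>Generic (non-degenerate) fold / saddle-node bifurcation of the family
  x' = field (\<pi> mu) x at (xs, mus) (Kuznetsov's conditions):
  equilibrium; 0 is a simple eigenvalue of the Jacobian and no other eigenvalue is on the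
  imaginary axis; with A v = 0, w^T A = 0 (v, w nonzero):
  w . D2_x f(v,v) \<noteq> 0 and w . d f / d mu \<noteq> 0.\<close>
definition generic_fold :: "(real \<Rightarrow> params) \<Rightarrow> real \<Rightarrow> real^3 \<Rightarrow> bool" where
  "generic_fold \<pi> mus xs \<longleftrightarrow>
     field (\<pi> mus) xs = 0 \<and>
     field (\<pi> mus) differentiable (at xs) \<and>
     charpoly (jac (\<pi> mus) xs) 0 = 0 \<and>
     deriv (charpoly (jac (\<pi> mus) xs)) 0 \<noteq> 0 \<and>
     (\<forall>z. charpoly (jac (\<pi> mus) xs) z = 0 \<and> Re z = 0 \<longrightarrow> z = 0) \<and>
     (\<exists>v w. v \<noteq> 0 \<and> w \<noteq> 0 \<and> jac (\<pi> mus) xs *v v = 0 \<and> w v* jac (\<pi> mus) xs = 0 \<and>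
        deriv (deriv (\<lambda>t. w \<bullet> field (\<pi> mus) (xs + t *\<^sub>R v))) 0 \<noteq> 0 \<and>
        deriv (\<lambda>mu. w \<bullet> field (\<pi> mu) xs) mus \<noteq> 0)"

end

theory Submission
  imports Defs "HOL-Library.Quadratic_Discriminant"
begin

text \<open>Fix \<open>r\<^sub>T = 1\<close>, \<open>T\<^sub>max = 6\<close>, \<open>b = 2\<close>, \<open>r\<^sub>I = \<delta> = 6\<close>, \<open>\<rho> = 3\<close>, \<open>R\<^sup>* = 1\<close>, \<open>c = 2\<close>
  and keep \<open>s\<close>, \<open>d\<close> free. For a positive steady state with total \<open>N = T + I\<close>, the \<open>I\<close>- and
  \<open>V\<close>-equations force \<open>T = N\<^sup>2/(3 - N)\<close>, \<open>I = N(3 - 2N)/(3 - N)\<close>, \<open>V = N(3 - 2N)/2\<close>, and the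
  \<open>T\<close>-equation becomes the cubic \<open>11/6 N\<^sup>3 - (2 + d) N\<^sup>2 - s N + 3 s = 0\<close>; so positive steady
  states are the roots of this cubic in \<open>(0, 3/2)\<close>. At \<open>(s, d) = (11/45, 91/180)\<close> the roots are
  \<open>-1/2, 2/3, 6/5\<close> and \<open>R\<^sub>0 < 1\<close>; Routh-Hurwitz makes the state with \<open>N = 2/3\<close> stable, while the
  characteristic polynomial at \<open>N = 6/5\<close> has a negative constant term, hence a positive root.
  Along \<open>s = 11/45 - \<mu>/14\<close>, \<open>d = 91/180 - \<mu>\<close> the cubic keeps the factor \<open>N + 1/2\<close> and the other
  two roots meet at \<open>N = 6/7\<close> when \<open>\<mu> = 88/315\<close>; there the fold conditions are checked with
  explicit left and right null vectors of the Jacobian.\<close>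

lemma deriv_deriv_eqI:
  fixes f f' :: "real \<Rightarrow> real"
  assumes "open S" "x \<in> S" "\<And>t. t \<in> S \<Longrightarrow> (f has_real_derivative f' t) (at t)"
    and "(f' has_real_derivative f'') (at x)"
  shows "deriv (deriv f) x = f''"
proof -
  have "eventually (\<lambda>t. deriv f t = f' t) (nhds x)"
    using eventually_nhds_in_open[OF assms(1,2)] by eventually_elim (use assms(3) DERIV_imp_deriv in blast)
  hence "deriv (deriv f) x = deriv f' x" by (rule deriv_cong_ev) simp
  also have "\<dots> = f''" using assms(4) by (rule DERIV_imp_deriv)
  finally show ?thesis .
qed

lemma C1_fun_affine: "C1_fun (\<lambda>x. a + b * x)"
  unfolding C1_fun_def by (rule exI[of _ "\<lambda>_. b"]) (auto intro!: derivative_eq_intros)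

subsection \<open>Cubic characteristic polynomials\<close>

lemma cubic_has_pos_root:
  fixes a b c :: real
  assumes "c < 0"
  shows "\<exists>t>0. t^3 + a*t^2 + b*t + c = 0"
proof -
  define f where "f t = t^3 + a*t^2 + b*t + c" for t
  define M where "M = 1 + \<bar>a\<bar> + \<bar>b\<bar> + \<bar>c\<bar>"
  have "1 \<le> M" unfolding M_def by simp
  hence M: "1 \<le> M" "M \<le> M^2" using mult_left_mono[of 1 M M] by (simp_all add: power2_eq_square)
  have "\<bar>b\<bar> * M + \<bar>c\<bar> < M^2 * (M - \<bar>a\<bar>)"
  proof -
    have "\<bar>b\<bar> * M \<le> \<bar>b\<bar> * M^2" using M by (simp add: mult_left_mono)
    moreover have "\<bar>c\<bar> < M^2 * (1 + \<bar>c\<bar>)" using M by (smt (verit) mult_less_cancel_right2 mult_pos_pos)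
    ultimately show ?thesis unfolding M_def by (simp add: algebra_simps)
  qed
  moreover have "M^3 - \<bar>a\<bar> * M^2 - \<bar>b\<bar> * M - \<bar>c\<bar> \<le> f M"
  proof -
    have "- \<bar>a\<bar> * M^2 \<le> a * M^2" by (intro mult_right_mono) auto
    moreover have "- \<bar>b\<bar> * M \<le> b * M" using M by (intro mult_right_mono) auto
    ultimately show ?thesis unfolding f_def by linarith
  qed
  ultimately have "0 < f M" by (simp add: algebra_simps power2_eq_square power3_eq_cube)
  hence "\<exists>t. 0 \<le> t \<and> t \<le> M \<and> f t = 0"
    using M assms by (intro IVT) (auto simp: f_def intro!: continuous_intros)
  then obtain t where "0 \<le> t" "f t = 0" by blast
  moreover have "t \<noteq> 0" using \<open>f t = 0\<close> assms by (auto simp: f_def)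
  ultimately show ?thesis unfolding f_def by (intro exI[of _ t]) auto
qed

lemma routh_hurwitz_cubic:
  fixes a b c :: real and z :: complex
  assumes "z^3 + of_real a * z^2 + of_real b * z + of_real c = 0" "a > 0" "c > 0" "a*b > c"
  shows "Re z < 0"
proof (rule ccontr)
  obtain x y where z: "z = Complex x y" by (cases z)
  assume "\<not> Re z < 0"
  hence x: "x \<ge> 0" using z by simp
  have re: "x^3 - 3*x*y^2 + a*(x^2 - y^2) + b*x + c = 0" and im: "y * (3*x^2 - y^2 + 2*a*x + b) = 0"
    using assms(1) unfolding z complex_eq_iff
    by (simp_all add: power2_eq_square power3_eq_cube algebra_simps)
  have b: "b > 0" using assms(2-4) by (metis mult_pos_pos not_less_iff_gr_or_eq order_less_trans zero_less_mult_pos)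
  show False
  proof (cases "y = 0")
    case True
    with re have "x^3 + a*x^2 + b*x + c = 0" by simp
    moreover have "x^3 + a*x^2 + b*x + c > 0" using x assms b by (simp add: add_nonneg_pos)
    ultimately show False by simp
  next
    case False
    with im have y2: "y^2 = 3*x^2 + 2*a*x + b" by simp
    \<comment> \<open>eliminating \<open>y\<close> leaves a polynomial in \<open>x \<ge> 0\<close> whose value is at most \<open>c - a b < 0\<close>\<close>
    from re have "-8*x^3 - 8*a*x^2 - (2*b + 2*a^2)*x + (c - a*b) = 0"
      unfolding y2 by (simp add: algebra_simps power2_eq_square power3_eq_cube)
    moreover have "x^3 \<ge> 0" "a*x^2 \<ge> 0" "(2*b + 2*a^2)*x \<ge> 0" using x assms(2) b by simp_all
    ultimately show False using assms(4) by linarith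
  qed
qed

lemma cubic_imaginary_root_eq_0:
  fixes a b :: real and z :: complex
  assumes "z^3 + of_real a * z^2 + of_real b * z = 0" "Re z = 0" "a \<noteq> 0"
  shows "z = 0"
proof -
  have "Re (z^3 + of_real a * z^2 + of_real b * z) = - a * (Im z)^2"
    using assms(2) by (cases z) (simp add: power2_eq_square power3_eq_cube)
  thus ?thesis using assms by (simp add: complex_eq_iff)
qed

lemma charpoly_vector3:
  "charpoly (vector [vector [a11, a12, a13], vector [a21, a22, a23], vector [a31, a32, a33]]) z =
    z^3 - of_real (a11 + a22 + a33) * z^2
    + of_real (a11*a22 - a12*a21 + a11*a33 - a13*a31 + a22*a33 - a23*a32) * z
    - of_real (a11*a22*a33 + a12*a23*a31 + a13*a21*a32 - a11*a23*a32 - a12*a21*a33 - a13*a22*a31)"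
  unfolding charpoly_def det_3
  by (simp add: algebra_simps power2_eq_square power3_eq_cube)

lemma stable_ssI:
  assumes "field p differentiable (at x)"
    and "\<And>z. charpoly (jac p x) z = z^3 + of_real a * z^2 + of_real b * z + of_real c"
    and "a > 0" "c > 0" "a*b > c"
  shows "stable_ss p x"
proof -
  have "Re z < 0" if "charpoly (jac p x) z = 0" for z
    using routh_hurwitz_cubic[OF _ assms(3-5)] that unfolding assms(2) .
  thus ?thesis unfolding stable_ss_def using assms(1) by blast
qed

lemma unstable_ssI:
  assumes "field p differentiable (at x)"
    and "\<And>z. charpoly (jac p x) z = z^3 + of_real a * z^2 + of_real b * z + of_real c"
    and "c < 0"
  shows "unstable_ss p x"
proof -
  obtain t where "t > 0" "t^3 + a*t^2 + b*t + c = 0" using cubic_has_pos_root[OF assms(3)] by blast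
  hence "charpoly (jac p x) (of_real t) = 0" "Re (of_real t) > 0"
    unfolding assms(2) by (simp_all flip: of_real_power of_real_mult of_real_add)
  thus ?thesis unfolding unstable_ss_def using assms(1) by blast
qed

subsection \<open>The two-parameter family\<close>

definition param_family :: "real \<Rightarrow> real \<Rightarrow> params" where
  "param_family s d =
     \<lparr>s_p = s, rT = 1, Tmax = 6, d_p = d, b_p = 2, rI = 6, delta = 6, rho = 3, Rstar = 1, c_p = 2\<rparr>"

lemma pos_params_family: "pos_params (param_family s d) \<longleftrightarrow> s > 0 \<and> d > 0"
  unfolding pos_params_def param_family_def by simp

definition infection :: "real^3 \<Rightarrow> real" where
  "infection x = x$1 * x$3 / (x$1 + x$2)"

lemma field_param_family:
  "field (param_family s d) x = vector [s + x$1 * (1 - (x$1 + x$2) * (1/6)) - d * x$1 - 2 * infection x,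
     6 * x$2 * (1 - (x$1 + x$2) * (1/6)) + 2 * infection x - 6 * x$2,
     3 * x$2 - 2 * x$3 - 2 * infection x]"
  by (simp add: field_def param_family_def Let_def infection_def mult.assoc)

definition state_of_total :: "real \<Rightarrow> real^3" where
  "state_of_total N = vector [N^2 / (3 - N), N * (3 - 2*N) / (3 - N), N * (3 - 2*N) / 2]"

definition steady_cubic :: "real \<Rightarrow> real \<Rightarrow> real \<Rightarrow> real" where
  "steady_cubic s d N = 11/6 * N^3 - (2 + d) * N^2 - s * N + 3 * s"

lemma state_of_total_components:
  assumes "N \<noteq> 3"
  shows "state_of_total N $ 1 * (3 - N) = N^2" "state_of_total N $ 2 * (3 - N) = N * (3 - 2*N)"
    "2 * state_of_total N $ 3 = N * (3 - 2*N)" "state_of_total N $ 1 + state_of_total N $ 2 = N"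
proof -
  have n: "3 - N \<noteq> 0" using assms by simp
  show c: "state_of_total N $ 1 * (3 - N) = N^2" "state_of_total N $ 2 * (3 - N) = N * (3 - 2*N)"
    "2 * state_of_total N $ 3 = N * (3 - 2*N)"
    unfolding state_of_total_def using n by simp_all
  have "(state_of_total N $ 1 + state_of_total N $ 2) * (3 - N) = N * (3 - N)"
    using c(1,2) by (simp add: algebra_simps power2_eq_square)
  thus "state_of_total N $ 1 + state_of_total N $ 2 = N" using n by simp
qed

lemma state_of_total_eq_iff:
  "N \<noteq> 3 \<Longrightarrow> M \<noteq> 3 \<Longrightarrow> state_of_total N = state_of_total M \<longleftrightarrow> N = M"
  by (metis state_of_total_components(4))

lemma state_of_total_steady:
  assumes "0 < N" "N < 3/2" "steady_cubic s d N = 0"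
  shows "state_of_total N \<in> pos_steady_states (param_family s d)"
proof -
  have N3: "3 - N > 0" "N \<noteq> 3" using assms by auto
  define T I V where "T = state_of_total N $ 1" "I = state_of_total N $ 2" "V = state_of_total N $ 3"
  have tT: "T * (3 - N) = N^2" and tI: "I * (3 - N) = N * (3 - 2*N)" and tV: "2 * V = N * (3 - 2*N)"
    and sum: "T + I = N"
    using state_of_total_components[OF N3(2)] unfolding T_I_V_def by auto
  have "(2*T*V) * (3 - N) = (I*N^2) * (3 - N)" using tT tI tV by algebra
  hence "2*T*V = I*N^2" using N3 by simp
  hence q: "2 * (T*V/N) = I*N" using assms(1) by (simp add: field_simps power2_eq_square)
  have "(6 * s + T*(6 - N) - 6*d*T - 6*I*N) * (3 - N) = 0"
    using tT tI assms(3) unfolding steady_cubic_def by algebra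
  hence "6 * s + T*(6 - N) - 6*d*T - 6*I*N = 0" using N3 by simp
  moreover have "s + T*(1 - N*(1/6)) - d*T - I*N = (6 * s + T*(6 - N) - 6*d*T - 6*I*N) / 6"
    by (simp add: field_simps)
  moreover have "(3*I - 2*V - I*N) * (3 - N) = 0" using tI tV by algebra
  hence "3*I - 2*V - I*N = 0" using N3 by simp
  ultimately have "s + T*(1 - N*(1/6)) - d*T - 2*(T*V/N) = 0"
    "6*I*(1 - N*(1/6)) + 2*(T*V/N) - 6*I = 0" "3*I - 2*V - 2*(T*V/N) = 0"
    using q sum by (simp_all add: algebra_simps)
  moreover have "infection (state_of_total N) = T*V/N" unfolding infection_def T_I_V_def[symmetric] sum ..
  ultimately have "field (param_family s d) (state_of_total N) = 0"
    unfolding field_param_family T_I_V_def[symmetric] sum by (simp add: vec_eq_iff forall_3)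
  moreover have "positive_state (state_of_total N)"
    unfolding positive_state_def state_of_total_def using assms N3 by (simp add: field_simps)
  ultimately show ?thesis unfolding pos_steady_states_def by blast
qed

lemma pos_steady_state_total:
  assumes "x \<in> pos_steady_states (param_family s d)"
  defines "N \<equiv> x$1 + x$2"
  shows "x = state_of_total N" "0 < N" "N < 3/2" "steady_cubic s d N = 0"
proof -
  define T I V where "T = x$1" "I = x$2" "V = x$3"
  have pos: "T > 0" "I > 0" "V > 0" "N > 0"
    using assms(1) unfolding pos_steady_states_def positive_state_def T_I_V_def N_def by auto
  have sum: "T + I = N" unfolding T_I_V_def N_def ..
  have e1: "s + T*(1 - N*(1/6)) - d*T - 2*(T*V/N) = 0"
   and e2: "6*I*(1 - N*(1/6)) + 2*(T*V/N) - 6*I = 0"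
   and e3: "3*I - 2*V - 2*(T*V/N) = 0"
    using assms(1) unfolding pos_steady_states_def field_param_family infection_def vec_eq_iff forall_3
      T_I_V_def N_def by simp_all
  have q: "2*(T*V/N) = I*N" using e2 by (simp add: algebra_simps)
  hence "2*T*V = I*N^2" using pos by (simp add: field_simps power2_eq_square)
  moreover have fV: "2*V = I*(3 - N)" using e3 q by (simp add: algebra_simps)
  ultimately have "I * (T*(3 - N)) = I * N^2" by algebra
  hence fT: "T*(3 - N) = N^2" using pos by simp
  have IN: "I*(3 - N) > 0" using fV pos by simp
  hence N3: "N < 3" using pos by (simp add: zero_less_mult_iff)
  have fI: "I*(3 - N) = N*(3 - 2*N)" using fT sum by algebra
  hence "N*(3 - 2*N) > 0" using IN by simp
  thus "N < 3/2" using pos by (simp add: zero_less_mult_iff)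
  show "0 < N" by (fact pos(4))
  have "(6 * s + T*(6 - N) - 6*d*T - 6*I*N) * (3 - N) = 6 * steady_cubic s d N"
    unfolding steady_cubic_def using fT fI by algebra
  moreover have "6 * s + T*(6 - N) - 6*d*T - 6*I*N = 0" using e1 q by (simp add: algebra_simps)
  ultimately show "steady_cubic s d N = 0" by simp
  have "T = N^2/(3 - N)" "I = N*(3 - 2*N)/(3 - N)" "V = N*(3 - 2*N)/2"
    using fT fI fV N3 by (simp_all add: field_simps)
  thus "x = state_of_total N" unfolding state_of_total_def vec_eq_iff forall_3 T_I_V_def by simp
qed

lemma pos_steady_states_family:
  "pos_steady_states (param_family s d) =
     state_of_total ` {N. 0 < N \<and> N < 3/2 \<and> steady_cubic s d N = 0}"
proof
  show "pos_steady_states (param_family s d) \<subseteq> state_of_total ` {N. 0 < N \<and> N < 3/2 \<and> steady_cubic s d N = 0}"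
    using pos_steady_state_total by (intro subsetI image_eqI) auto
  show "state_of_total ` {N. 0 < N \<and> N < 3/2 \<and> steady_cubic s d N = 0} \<subseteq> pos_steady_states (param_family s d)"
    using state_of_total_steady by blast
qed

subsection \<open>Linearisation\<close>

lemma vector3_eq_axis_sum:
  "(vector [a, b, c] :: real^3) = a *\<^sub>R axis 1 1 + b *\<^sub>R axis 2 1 + c *\<^sub>R axis 3 1"
  by (simp add: vec_eq_iff forall_3 axis_def)

lemma has_derivative_vec_nth: "((\<lambda>x::real^'n. x$i) has_derivative (\<lambda>h. h$i)) F"
  by (simp add: bounded_linear_vec_nth bounded_linear_imp_has_derivative)

lemma has_derivative_infection:
  assumes "x$1 + x$2 \<noteq> 0"
  shows "(infection has_derivative
     (\<lambda>h. (x$3*x$2/(x$1 + x$2)^2) * h$1 - (x$1*x$3/(x$1 + x$2)^2) * h$2 + (x$1/(x$1 + x$2)) * h$3)) (at x)"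
  unfolding infection_def[abs_def]
  by (rule has_derivative_eq_rhs, (rule has_derivative_divide has_derivative_mult has_derivative_add
      has_derivative_vec_nth assms)+)
    (use assms in \<open>simp add: fun_eq_iff divide_simps; simp add: algebra_simps power2_eq_square\<close>)

definition jacobian_family :: "real \<Rightarrow> real^3 \<Rightarrow> real^3^3" where
  "jacobian_family d x = (let T = x$1; I = x$2; V = x$3; N = x$1 + x$2 in
     vector [vector [1 - N/6 - T/6 - d - 2*V*I/N^2, -T/6 + 2*T*V/N^2, -2*T/N],
             vector [-I + 2*V*I/N^2, -N - I - 2*T*V/N^2, 2*T/N],
             vector [-2*V*I/N^2, 3 + 2*T*V/N^2, -2 - 2*T/N]])"

lemma has_derivative_field_family:
  assumes "x$1 + x$2 \<noteq> 0"
  shows "(field (param_family s d) has_derivative (\<lambda>h. jacobian_family d x *v h)) (at x)"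
  unfolding field_param_family[abs_def] vector3_eq_axis_sum
  by (rule has_derivative_eq_rhs,
      (rule derivative_intros has_derivative_vec_nth has_derivative_infection[OF assms])+)
    (simp add: fun_eq_iff vec_eq_iff forall_3 axis_def jacobian_family_def matrix_vector_mult_def
      sum_3 Let_def, simp add: algebra_simps)

lemma jac_state_of_total:
  assumes "0 < N" "N < 3/2"
  shows "jac (param_family s d) (state_of_total N) = jacobian_family d (state_of_total N)"
    and "field (param_family s d) differentiable (at (state_of_total N))"
proof -
  have "state_of_total N $ 1 + state_of_total N $ 2 \<noteq> 0"
    using state_of_total_components(4)[of N] assms by simp
  note D = has_derivative_field_family[OF this]
  show "jac (param_family s d) (state_of_total N) = jacobian_family d (state_of_total N)"
    unfolding jac_def frechet_derivative_at[OF D, symmetric] by (rule matrix_of_matrix_vector_mul)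
  show "field (param_family s d) differentiable (at (state_of_total N))"
    using D by (rule differentiableI)
qed

subsection \<open>The base point\<close>

definition base_params :: params where
  "base_params = param_family (11/45) (91/180)"

lemma steady_cubic_base:
  "steady_cubic (11/45) (91/180) N = 11/6 * (N + 1/2) * (N - 2/3) * (N - 6/5)"
  unfolding steady_cubic_def by (simp add: field_simps power2_eq_square power3_eq_cube)

lemma pos_steady_states_base:
  "pos_steady_states base_params = {state_of_total (2/3), state_of_total (6/5)}"
proof -
  have "{N. 0 < N \<and> N < 3/2 \<and> steady_cubic (11/45) (91/180) N = 0} = {2/3, 6/5}"
    unfolding steady_cubic_base by auto
  thus ?thesis unfolding base_params_def pos_steady_states_family by simp
qed

lemma charpoly_base_small:
  "charpoly (jac base_params (state_of_total (2/3))) z =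
     z^3 + of_real (6337/1260) * z^2 + of_real (31054/6615) * z + of_real (44/27)"
  unfolding base_params_def jac_state_of_total[of "2/3", simplified]
  by (simp add: jacobian_family_def state_of_total_def power2_eq_square charpoly_vector3)

lemma charpoly_base_large:
  "charpoly (jac base_params (state_of_total (6/5))) z =
     z^3 + of_real (967/180) * z^2 + of_real (1436/675) * z + of_real (-748/675)"
  unfolding base_params_def jac_state_of_total[of "6/5", simplified]
  by (simp add: jacobian_family_def state_of_total_def power2_eq_square charpoly_vector3)

lemma stable_base_small: "stable_ss base_params (state_of_total (2/3))"
  by (rule stable_ssI[OF _ charpoly_base_small])
    (simp_all add: base_params_def jac_state_of_total)

lemma unstable_base_large: "unstable_ss base_params (state_of_total (6/5))"
  by (rule unstable_ssI[OF _ charpoly_base_large])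
    (simp_all add: base_params_def jac_state_of_total)

lemma R0_base:
  "rI base_params * (1 - p0 base_params / Tmax base_params) < delta base_params"
  "R0 base_params < 1"
proof -
  have "sqrt ((1 - 91/180)^2 + 4 * (11/45) * 1 / 6) \<ge> 89/180"
    by (rule real_le_rsqrt) (simp add: power2_eq_square)
  hence p: "p0 base_params \<ge> 89/30" unfolding p0_def base_params_def param_family_def by simp
  show "rI base_params * (1 - p0 base_params / Tmax base_params) < delta base_params"
    using p unfolding base_params_def param_family_def by simp
  have "R0 base_params = 3 / (2 * p0 base_params)"
    unfolding R0_def base_params_def param_family_def by (simp add: field_simps)
  also have "\<dots> < 1" using p by (simp add: field_simps)
  finally show "R0 base_params < 1" .
qed

subsection \<open>The fold\<close>

definition fold_path :: "real \<Rightarrow> params" where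
  "fold_path mu = param_family (11/45 - mu/14) (91/180 - mu)"

definition mu_fold :: real where
  "mu_fold = 88/315"

lemma fold_path_0: "fold_path 0 = base_params"
  unfolding fold_path_def base_params_def by simp

lemma fold_path_mu_fold: "fold_path mu_fold = param_family (11/49) (19/84)"
  unfolding fold_path_def mu_fold_def by simp

lemma smooth_variation_fold_path: "smooth_variation fold_path"
proof -
  have const: "C1_fun (\<lambda>x. a)" for a using C1_fun_affine[of a 0] by simp
  have "s_p \<circ> fold_path = (\<lambda>x. 11/45 + (-1/14) * x)" "d_p \<circ> fold_path = (\<lambda>x. 91/180 + (-1) * x)"
    "rT \<circ> fold_path = (\<lambda>x. 1)" "Tmax \<circ> fold_path = (\<lambda>x. 6)" "b_p \<circ> fold_path = (\<lambda>x. 2)"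
    "rI \<circ> fold_path = (\<lambda>x. 6)" "delta \<circ> fold_path = (\<lambda>x. 6)" "rho \<circ> fold_path = (\<lambda>x. 3)"
    "Rstar \<circ> fold_path = (\<lambda>x. 1)" "c_p \<circ> fold_path = (\<lambda>x. 2)"
    unfolding fold_path_def param_family_def by (auto simp: fun_eq_iff)
  thus ?thesis unfolding smooth_variation_def using const C1_fun_affine by metis
qed

lemma pos_params_fold_path: "mu \<in> {0..mu_fold} \<Longrightarrow> pos_params (fold_path mu)"
  unfolding fold_path_def pos_params_family mu_fold_def by auto

definition path_discrim :: "real \<Rightarrow> real" where
  "path_discrim mu = discrim 22 (12*mu - 616/15) (88/5 - 36*mu/7)"

definition small_total :: "real \<Rightarrow> real" where
  "small_total mu = (616/15 - 12*mu - sqrt (path_discrim mu)) / 44"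

definition large_total :: "real \<Rightarrow> real" where
  "large_total mu = (616/15 - 12*mu + sqrt (path_discrim mu)) / 44"

lemma steady_cubic_fold_path:
  "steady_cubic (11/45 - mu/14) (91/180 - mu) N =
     (N + 1/2) * (22*N^2 + (12*mu - 616/15)*N + (88/5 - 36*mu/7)) / 12"
  unfolding steady_cubic_def by (simp add: field_simps power2_eq_square power3_eq_cube)

lemma path_discrim_eq: "path_discrim mu = 144 * (mu_fold - mu) * (154/45 - mu)"
  unfolding path_discrim_def discrim_def mu_fold_def by (simp add: field_simps power2_eq_square)

lemma path_quadratic_eq_0_iff:
  assumes "path_discrim mu \<ge> 0"
  shows "22 * N^2 + (12*mu - 616/15) * N + (88/5 - 36*mu/7) = 0 \<longleftrightarrow>
      N = small_total mu \<or> N = large_total mu"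
  using discriminant_nonneg[of 22 "12*mu - 616/15" "88/5 - 36*mu/7" N] assms
  unfolding small_total_def large_total_def path_discrim_def by (auto simp: algebra_simps)

lemma fold_branches:
  assumes "mu \<in> {0..<mu_fold}"
  shows "0 < small_total mu" "small_total mu < large_total mu" "large_total mu < 3/2"
    "steady_cubic (11/45 - mu/14) (91/180 - mu) (small_total mu) = 0"
    "steady_cubic (11/45 - mu/14) (91/180 - mu) (large_total mu) = 0"
proof -
  have mu: "0 \<le> mu" "mu < 88/315" using assms unfolding mu_fold_def by auto
  define r where "r = sqrt (path_discrim mu)"
  have D: "path_discrim mu > 0" unfolding path_discrim_eq mu_fold_def using mu by simp
  hence r: "r > 0" "r^2 = path_discrim mu" unfolding r_def by simp_all
  have "r^2 < (616/15 - 12*mu)^2"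
    using r mu unfolding path_discrim_def discrim_def by (simp add: power2_commute[of "12*mu"])
  hence "r < 616/15 - 12*mu" using mu r(1) by (simp add: power_less_imp_less_base)
  thus "0 < small_total mu" unfolding small_total_def r_def[symmetric] by simp
  show "small_total mu < large_total mu" unfolding small_total_def large_total_def r_def[symmetric] using r by simp
  have "r^2 < (66 - (616/15 - 12*mu))^2"
    using r mu unfolding path_discrim_def discrim_def by (simp add: power2_eq_square algebra_simps)
  hence "r < 66 - (616/15 - 12*mu)" using mu r(1) by (simp add: power_less_imp_less_base)
  thus "large_total mu < 3/2" unfolding large_total_def r_def[symmetric] by simp
  have "22 * N^2 + (12*mu - 616/15) * N + (88/5 - 36*mu/7) = 0"
    if "N = small_total mu \<or> N = large_total mu" for N
    using path_quadratic_eq_0_iff[of mu N] D that by (meson less_imp_le)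
  then show "steady_cubic (11/45 - mu/14) (91/180 - mu) (small_total mu) = 0"
    "steady_cubic (11/45 - mu/14) (91/180 - mu) (large_total mu) = 0"
    unfolding steady_cubic_fold_path by (metis mult_zero_right div_0)+
qed

lemma fold_branches_mu_fold: "small_total mu_fold = 6/7" "large_total mu_fold = 6/7"
  unfolding small_total_def large_total_def path_discrim_eq mu_fold_def by simp_all

lemma isCont_state_of_total: "N \<noteq> 3 \<Longrightarrow> isCont state_of_total N"
  unfolding state_of_total_def[abs_def] vector3_eq_axis_sum by (auto intro!: continuous_intros)

lemma isCont_fold_branches: "isCont small_total mu" "isCont large_total mu"
  unfolding small_total_def[abs_def] large_total_def[abs_def] path_discrim_def discrim_def
  by (auto intro!: continuous_intros)

lemma fold_branch_states:
  assumes "f = small_total \<or> f = large_total"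
  shows "continuous_on {0..<mu_fold} (\<lambda>mu. state_of_total (f mu))"
    and "((\<lambda>mu. state_of_total (f mu)) \<longlongrightarrow> state_of_total (6/7)) (at_left mu_fold)"
proof -
  have cont: "isCont f mu" for mu using assms isCont_fold_branches by auto
  have "f mu < 3/2" if "mu \<in> {0..<mu_fold}" for mu using assms fold_branches[OF that] by auto
  thus "continuous_on {0..<mu_fold} (\<lambda>mu. state_of_total (f mu))"
    by (intro continuous_at_imp_continuous_on ballI isCont_o2[OF cont] isCont_state_of_total) force
  have "(f \<longlongrightarrow> f mu_fold) (at_left mu_fold)"
    using cont[of mu_fold] by (simp add: isCont_def filterlim_at_split)
  moreover have "f mu_fold = 6/7" using assms fold_branches_mu_fold by auto
  ultimately have "(f \<longlongrightarrow> 6/7) (at_left mu_fold)" by metis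
  thus "((\<lambda>mu. state_of_total (f mu)) \<longlongrightarrow> state_of_total (6/7)) (at_left mu_fold)"
    by (rule isCont_tendsto_compose[OF isCont_state_of_total, rotated]) simp
qed

lemma fold_branches_steady:
  assumes "mu \<in> {0..<mu_fold}"
  shows "state_of_total (small_total mu) \<in> pos_steady_states (fold_path mu)"
    "state_of_total (large_total mu) \<in> pos_steady_states (fold_path mu)"
    "state_of_total (small_total mu) \<noteq> state_of_total (large_total mu)"
  using fold_branches[OF assms] state_of_total_steady state_of_total_eq_iff
  unfolding fold_path_def by force+

definition fold_kernel :: "real^3" where
  "fold_kernel = vector [-336, -14, 75]"

definition fold_cokernel :: "real^3" where
  "fold_cokernel = vector [-108, 67, 50]"

lemma jacobian_fold:
  "jac (fold_path mu_fold) (state_of_total (6/7)) =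
     vector [vector [-83/420, 16/35, -4/5], vector [9/35, -66/35, 4/5], vector [-27/35, 123/35, -14/5]]"
  unfolding fold_path_mu_fold jac_state_of_total[of "6/7", simplified]
  by (simp add: jacobian_family_def state_of_total_def power2_eq_square)

lemma charpoly_fold:
  "charpoly (jac (fold_path mu_fold) (state_of_total (6/7))) =
     (\<lambda>z. z^3 + of_real (293/60) * z^2 + of_real (391/147) * z)"
  unfolding jacobian_fold charpoly_vector3 by (simp add: fun_eq_iff)

lemma fold_profile:
  "(\<lambda>t. fold_cokernel \<bullet> field (fold_path mu_fold) (state_of_total (6/7) + t *\<^sub>R fold_kernel)) =
     (\<lambda>t. -2700/49 + 24000*t + 1788500*t^2 + 250 * ((12/35 - 336*t) * (27/49 + 75*t) / (6/7 - 350*t)))"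
proof
  fix t :: real
  define T I V where "T = 12/35 - 336*t" "I = 18/35 - 14*t" "V = 27/49 + 75*t"
  have line: "state_of_total (6/7) + t *\<^sub>R fold_kernel = vector [T, I, V]"
    unfolding state_of_total_def fold_kernel_def T_I_V_def by (simp add: vec_eq_iff forall_3 power2_eq_square)
  have total: "T + I = 6/7 - 350*t" unfolding T_I_V_def by simp
  show "fold_cokernel \<bullet> field (fold_path mu_fold) (state_of_total (6/7) + t *\<^sub>R fold_kernel) =
      -2700/49 + 24000*t + 1788500*t^2 + 250 * ((12/35 - 336*t) * (27/49 + 75*t) / (6/7 - 350*t))"
    unfolding line fold_path_mu_fold field_param_family infection_def fold_cokernel_def
    by (simp add: inner_vec_def sum_3 total) (simp add: T_I_V_def field_simps power2_eq_square)
qed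

text \<open>By partial fractions the rational term of the profile is an affine function minus
  \<open>(4320/49) / (6/7 - 350 t)\<close>.\<close>

lemma fold_profile_deriv:
  assumes "6/7 - 350*t \<noteq> (0::real)"
  shows "((\<lambda>t. -2700/49 + 24000*t + 1788500*t^2 + 250 * ((12/35 - 336*t) * (27/49 + 75*t) / (6/7 - 350*t)))
     has_real_derivative 42000 + 3577000*t - (216000/7) / (6/7 - 350*t)^2) (at t)"
  by (rule derivative_eq_intros refl assms)+
    (use assms in \<open>simp add: divide_simps power2_eq_square; simp add: algebra_simps\<close>)

lemma fold_second_derivative:
  "deriv (deriv (\<lambda>t. fold_cokernel \<bullet> field (fold_path mu_fold) (state_of_total (6/7) + t *\<^sub>R fold_kernel))) 0
     = -30723000"
  unfolding fold_profile
proof (rule deriv_deriv_eqI)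
  show "open {..<3/1225::real}" "0 \<in> {..<3/1225::real}" by simp_all
  show "((\<lambda>t. -2700/49 + 24000*t + 1788500*t^2 + 250 * ((12/35 - 336*t) * (27/49 + 75*t) / (6/7 - 350*t)))
      has_real_derivative 42000 + 3577000*t - (216000/7) / (6/7 - 350*t)^2) (at t)"
    if "t \<in> {..<3/1225}" for t
    using that by (intro fold_profile_deriv) simp
  show "((\<lambda>t. 42000 + 3577000*t - (216000/7) / (6/7 - 350*t)^2) has_real_derivative -30723000) (at 0)"
    by (auto intro!: derivative_eq_intros simp: field_simps power2_eq_square)
qed

lemma fold_cokernel_field_fold_path:
  "fold_cokernel \<bullet> field (fold_path mu) x =
     fold_cokernel \<bullet> field (param_family 0 0) x - 108 * (11/45 - mu/14) + 108 * (91/180 - mu) * x$1"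
  unfolding fold_cokernel_def fold_path_def field_param_family by (simp add: inner_vec_def sum_3 algebra_simps)

lemma fold_transversality:
  "deriv (\<lambda>mu. fold_cokernel \<bullet> field (fold_path mu) (state_of_total (6/7))) mu_fold = -1026/35"
proof -
  have "state_of_total (6/7) $ 1 = 12/35" unfolding state_of_total_def by (simp add: power2_eq_square)
  hence "((\<lambda>mu. fold_cokernel \<bullet> field (fold_path mu) (state_of_total (6/7)))
      has_real_derivative -1026/35) (at mu_fold)"
    unfolding fold_cokernel_field_fold_path by (auto intro!: derivative_eq_intros)
  thus ?thesis by (rule DERIV_imp_deriv)
qed

lemma fold_point_steady: "state_of_total (6/7) \<in> pos_steady_states (fold_path mu_fold)"
  using state_of_total_steady[of "6/7"] unfolding fold_path_mu_fold
  by (simp add: steady_cubic_def power2_eq_square power3_eq_cube)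

lemma generic_fold_fold_path: "generic_fold fold_path mu_fold (state_of_total (6/7))"
proof -
  let ?A = "jac (fold_path mu_fold) (state_of_total (6/7))"
  have steady: "field (fold_path mu_fold) (state_of_total (6/7)) = 0"
    using fold_point_steady unfolding pos_steady_states_def by simp
  have differentiable: "field (fold_path mu_fold) differentiable (at (state_of_total (6/7)))"
    unfolding fold_path_mu_fold by (simp add: jac_state_of_total)
  have "((\<lambda>z::complex. z^3 + of_real (293/60) * z^2 + of_real (391/147) * z)
      has_field_derivative of_real (391/147)) (at 0)"
    by (auto intro!: derivative_eq_intros)
  hence simple: "charpoly ?A 0 = 0" "deriv (charpoly ?A) 0 \<noteq> 0"
    unfolding charpoly_fold by (simp_all add: DERIV_imp_deriv)
  have imaginary: "\<forall>z. charpoly ?A z = 0 \<and> Re z = 0 \<longrightarrow> z = 0"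
    unfolding charpoly_fold by (auto intro: cubic_imaginary_root_eq_0[of _ "293/60" "391/147"])
  have "fold_kernel \<noteq> 0" "fold_cokernel \<noteq> 0" "?A *v fold_kernel = 0" "fold_cokernel v* ?A = 0"
    unfolding jacobian_fold fold_kernel_def fold_cokernel_def
    by (simp_all add: matrix_vector_mult_def vector_matrix_mult_def sum_3 vec_eq_iff forall_3)
  moreover have
    "deriv (deriv (\<lambda>t. fold_cokernel \<bullet> field (fold_path mu_fold) (state_of_total (6/7) + t *\<^sub>R fold_kernel))) 0 \<noteq> 0"
    "deriv (\<lambda>mu. fold_cokernel \<bullet> field (fold_path mu) (state_of_total (6/7))) mu_fold \<noteq> 0"
    by (simp_all add: fold_second_derivative fold_transversality)
  ultimately have null_vectors: "\<exists>v w. v \<noteq> 0 \<and> w \<noteq> 0 \<and> ?A *v v = 0 \<and> w v* ?A = 0 \<and>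
      deriv (deriv (\<lambda>t. w \<bullet> field (fold_path mu_fold) (state_of_total (6/7) + t *\<^sub>R v))) 0 \<noteq> 0 \<and>
      deriv (\<lambda>mu. w \<bullet> field (fold_path mu) (state_of_total (6/7))) mu_fold \<noteq> 0"
    by (intro exI[of _ fold_kernel] exI[of _ fold_cokernel] conjI)
  show ?thesis
    unfolding generic_fold_def by (intro conjI steady differentiable simple imaginary null_vectors)
qed

theorem theorem4:
  shows "\<exists>p. pos_params p \<and> delta p > rI p * (1 - p0 p / Tmax p) \<and> R0 p < 1 \<and>
     card (pos_steady_states p) = 2 \<and>
     (\<exists>x1 x2. pos_steady_states p = {x1, x2} \<and> stable_ss p x1 \<and> unstable_ss p x2) \<and>
     (\<exists>\<pi> mus xs y1 y2. smooth_variation \<pi> \<and> \<pi> 0 = p \<and> mus > 0 \<and>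
        (\<forall>mu\<in>{0..mus}. pos_params (\<pi> mu)) \<and>
        continuous_on {0..<mus} y1 \<and> continuous_on {0..<mus} y2 \<and>
        y1 0 \<in> pos_steady_states p \<and> y2 0 \<in> pos_steady_states p \<and>
        (\<forall>mu\<in>{0..<mus}. y1 mu \<in> pos_steady_states (\<pi> mu) \<and>
                         y2 mu \<in> pos_steady_states (\<pi> mu) \<and> y1 mu \<noteq> y2 mu) \<and>
        (y1 \<longlongrightarrow> xs) (at_left mus) \<and> (y2 \<longlongrightarrow> xs) (at_left mus) \<and>
        positive_state xs \<and> generic_fold \<pi> mus xs)"
proof (intro exI conjI)
  have mu0: "0 \<in> {0..<mu_fold}" unfolding mu_fold_def by simp
  show "pos_params base_params" unfolding base_params_def pos_params_family by simp
  show "delta base_params > rI base_params * (1 - p0 base_params / Tmax base_params)" "R0 base_params < 1"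
    by (fact R0_base)+
  show "pos_steady_states base_params = {state_of_total (2/3), state_of_total (6/5)}"
    by (fact pos_steady_states_base)
  thus "card (pos_steady_states base_params) = 2" using state_of_total_eq_iff[of "2/3" "6/5"] by simp
  show "stable_ss base_params (state_of_total (2/3))" "unstable_ss base_params (state_of_total (6/5))"
    by (fact stable_base_small unstable_base_large)+
  show "smooth_variation fold_path" "fold_path 0 = base_params" "mu_fold > 0"
    "\<forall>mu\<in>{0..mu_fold}. pos_params (fold_path mu)"
    by (simp_all add: smooth_variation_fold_path fold_path_0 mu_fold_def pos_params_fold_path)
  show "continuous_on {0..<mu_fold} (\<lambda>mu. state_of_total (small_total mu))"
    "continuous_on {0..<mu_fold} (\<lambda>mu. state_of_total (large_total mu))"
    "((\<lambda>mu. state_of_total (small_total mu)) \<longlongrightarrow> state_of_total (6/7)) (at_left mu_fold)"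
    "((\<lambda>mu. state_of_total (large_total mu)) \<longlongrightarrow> state_of_total (6/7)) (at_left mu_fold)"
    by (simp_all add: fold_branch_states)
  show "state_of_total (small_total 0) \<in> pos_steady_states base_params"
    "state_of_total (large_total 0) \<in> pos_steady_states base_params"
    using fold_branches_steady[OF mu0] by (simp_all add: fold_path_0)
  show "\<forall>mu\<in>{0..<mu_fold}. state_of_total (small_total mu) \<in> pos_steady_states (fold_path mu) \<and>
      state_of_total (large_total mu) \<in> pos_steady_states (fold_path mu) \<and>
      state_of_total (small_total mu) \<noteq> state_of_total (large_total mu)"
    using fold_branches_steady by blast
  show "positive_state (state_of_total (6/7))"
    using fold_point_steady unfolding pos_steady_states_def by simp
  show "generic_fold fold_path mu_fold (state_of_total (6/7))" by (fact generic_fold_fold_path)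
qed

end
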